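(* Let $n \geq 1$. The map $\Psi_n$ defined below is a bijection from the set of strong compositions of $n$ onto the set of subsets of $[n-1]$, and whenever $\Psi_n(\alpha) = I$ we have \[ n - \ell(\alpha) = |I| \qquad\text{and}\qquad 2b(\alpha) - \binom{\ell(\alpha)}{2} + \operatorname{coinv}(\alpha) = \binom{n}{2} - \operatorname{Sum}(I). \] Consequently, \[ \sum_{\alpha \vDash n} z^{n-\ell(\alpha)} q^{2b(\alpha) - \binom{\ell(\alpha)}{2} + \operatorname{coinv}(\alpha)} = \sum_{I \subset [n-1]} z^{|I|} q^{\binom{n}{2} - \operatorname{Sum}(I)}. \]
   Context: A strong composition $\alpha \vDash n$ is a sequence $(\alpha_1, \ldots, \alpha_\ell)$ of positive integers summing to $n$; $\ell(\alpha)$ is its length. $\operatorname{coinv}(\alpha) = \#\{1 \leq i < j \leq \ell(\alpha) : \alpha_i < \alpha_j\}$. If $\mu = (\mu_1 \geq \mu_2 \geq \cdots)$ is the weakly decreasing rearrangement of $\alpha$, then $b(\alpha) = \sum_i (i-1)\mu_i$. For $I \subset [n-1]$, $\operatorname{Sum}(I) = \sum_{i \in I} i$. Definition of $\Psi_n$: draw $\alpha$ as a left-justified diagram whose $i$-th row from the top has $\alpha_i$ cells. For $t \geq 1$ let $m_t$ be the number of cells in columns $1, \ldots, t$. For each $t \geq 1$, list the rows $r_1 < r_2 < \cdots < r_p$ (top to bottom) having at least $t$ cells; for each $q \in \{1, \ldots, p\}$ such that row $r_q$ has at least $t+1$ cells, write the number $m_t - (q-1)$ in the cell of row $r_q$ in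 column $t+1$. (Equivalently: fill the second column top to bottom with $m_1, m_1 - 1, \ldots$, skipping missing cells, then delete the first column and empty rows and repeat with maximum $m_2$, and so on.) Then $\Psi_n(\alpha)$ is the set of all numbers written. For example $\Psi_{11}(1,3,2,1,3,1) = \{2,4,5,7,9\}$. *)

theory Defs
  imports Main
begin

definition compositions :: "nat \<Rightarrow> nat list set" where
  "compositions n = {\<alpha>. (\<forall>x\<in>set \<alpha>. 0 < x) \<and> sum_list \<alpha> = n}"

definition coinv :: "nat list \<Rightarrow> nat" where
  "coinv \<alpha> = card {(i, j). i < j \<and> j < length \<alpha> \<and> \<alpha> ! i < \<alpha> ! j}"

text \<open>b(alpha) = sum_i (i-1) mu_i with mu the weakly decreasing rearrangement (0-indexed here).\<close>
definition bstat :: "nat list \<Rightarrow> nat" where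
  "bstat \<alpha> = (let \<mu> = rev (sort \<alpha>) in \<Sum>i<length \<mu>. i * \<mu> ! i)"

text \<open>m_t = number of cells in columns 1..t of the diagram of alpha.\<close>
definition mcols :: "nat list \<Rightarrow> nat \<Rightarrow> nat" where
  "mcols \<alpha> t = (\<Sum>i<length \<alpha>. min (\<alpha> ! i) t)"

text \<open>Psi: for t >= 1 and a row i (0-indexed) with at least t+1 cells, the number written
  in column t+1 of that row is m_t - (q-1), where q-1 is the number of rows above row i
  having at least t cells.\<close>
definition Psi :: "nat list \<Rightarrow> nat set" where
  "Psi \<alpha> = {mcols \<alpha> t - card {j. j < i \<and> t \<le> \<alpha> ! j} | t i.
               1 \<le> t \<and> i < length \<alpha> \<and> t + 1 \<le> \<alpha> ! i}"

end

theory Submission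
  imports Defs "HOL-Library.Sublist" "HOL-Library.Multiset"
begin

text \<open>
  Delete the first column of the diagram of \<open>\<alpha>\<close> together with the rows that become empty.
  What remains is a composition \<open>\<alpha>'\<close> of \<open>n - l(\<alpha>)\<close>, and the labelling defining \<open>\<Psi>\<close>
  restarts on \<open>\<alpha>'\<close> with every label shifted by \<open>m\<^sub>1 = l(\<alpha>)\<close>.  So \<open>\<Psi>(\<alpha>)\<close> is the disjoint
  union of the second-column labels \<open>{l(\<alpha>) - i | \<alpha>\<^sub>i \<ge> 2} \<subseteq> [l(\<alpha>)]\<close> and of \<open>l(\<alpha>) + \<Psi>(\<alpha>')\<close>.
  As \<open>\<alpha>\<close> is determined by its length, its second column and \<open>\<alpha>'\<close>, induction on \<open>n\<close> gives the
  bijection and \<open>|\<Psi>(\<alpha>)| = n - l(\<alpha>)\<close>.  For the statistic, write \<open>b(\<alpha>) = \<Sum>\<^sub>i\<^sub><\<^sub>j min \<alpha>\<^sub>i \<alpha>\<^sub>j\<close>: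
  passing to \<open>\<alpha>'\<close> lowers \<open>b\<close> by \<open>l(\<alpha>) choose 2\<close> and \<open>coinv\<close> by the number of pairs of a
  row of length 1 above a longer row, and these changes balance the change of \<open>Sum(\<Psi>(\<alpha>))\<close>.
\<close>

lemma UN_nat_shift: "(\<Union>n. A n) = A 0 \<union> (\<Union>n. A (Suc n))"
proof -
  have "(UNIV :: nat set) = insert 0 (range Suc)"
    by (metis UNIV_eq_I insertCI nat.exhaust rangeI)
  then show ?thesis
    by (metis UN_insert image_image)
qed

lemma suffix_Cons_iff_drop: "suffix (y # ys) \<alpha> \<longleftrightarrow> (\<exists>i<length \<alpha>. drop i \<alpha> = y # ys)"
proof
  assume "suffix (y # ys) \<alpha>"
  then obtain zs where "\<alpha> = zs @ y # ys"
    by (auto elim: suffixE)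
  then show "\<exists>i<length \<alpha>. drop i \<alpha> = y # ys"
    by (intro exI[of _ "length zs"]) simp
qed (metis suffix_drop)

lemma length_le_sum_list: "0 \<notin> set (\<alpha> :: nat list) \<Longrightarrow> length \<alpha> \<le> sum_list \<alpha>"
  by (induction \<alpha>) (auto simp: Suc_le_eq)

section \<open>Removing the first column of a diagram\<close>

definition remove_first_column :: "nat list \<Rightarrow> nat list" where
  "remove_first_column \<alpha> = map (\<lambda>x. x - 1) (filter (\<lambda>x. 2 \<le> x) \<alpha>)"

lemma remove_first_column_simps [simp]:
  "remove_first_column [] = []"
  "remove_first_column (x # xs) =
     (if 2 \<le> x then (x - 1) # remove_first_column xs else remove_first_column xs)"
  by (simp_all add: remove_first_column_def)

lemma zero_notin_remove_first_column: "0 \<notin> set (remove_first_column \<alpha>)"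
  by (induction \<alpha>) auto

lemma sum_list_remove_first_column:
  "0 \<notin> set \<alpha> \<Longrightarrow> sum_list \<alpha> = length \<alpha> + sum_list (remove_first_column \<alpha>)"
  by (induction \<alpha>) auto

lemma length_filter_remove_first_column:
  "length (filter (\<lambda>x. Suc t \<le> x) (remove_first_column xs))
     = length (filter (\<lambda>x. Suc (Suc t) \<le> x) xs)"
  by (induction xs) auto

lemma length_filter_less_remove_first_column:
  "length (filter (\<lambda>y. t < y) (remove_first_column xs)) = length (filter (\<lambda>y. Suc t < y) xs)"
  by (induction xs) auto

lemma suffix_Cons_remove_first_column_iff:
  "suffix (z # zs) (remove_first_column \<alpha>) \<longleftrightarrow>
     (\<exists>y ys. suffix (y # ys) \<alpha> \<and> 2 \<le> y \<and> z = y - 1 \<and> zs = remove_first_column ys)"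
proof
  show "suffix (z # zs) (remove_first_column \<alpha>) \<Longrightarrow>
     \<exists>y ys. suffix (y # ys) \<alpha> \<and> 2 \<le> y \<and> z = y - 1 \<and> zs = remove_first_column ys"
    by (induction \<alpha>) (auto simp: suffix_Cons split: if_splits intro: suffix_ConsI)
next
  assume "\<exists>y ys. suffix (y # ys) \<alpha> \<and> 2 \<le> y \<and> z = y - 1 \<and> zs = remove_first_column ys"
  then obtain y ys where "suffix (y # ys) \<alpha>" "2 \<le> y" "z # zs = remove_first_column (y # ys)"
    by auto
  then show "suffix (z # zs) (remove_first_column \<alpha>)"
    unfolding remove_first_column_def by (metis filter_mono_suffix map_mono_suffix)
qed

lemma column_induct [consumes 1, case_names Nil step]:
  assumes "0 \<notin> set \<alpha>"
    and "P []"
    and "\<And>\<alpha>. \<alpha> \<noteq> [] \<Longrightarrow> 0 \<notin> set \<alpha> \<Longrightarrow> P (remove_first_column \<alpha>) \<Longrightarrow> P \<alpha>"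
  shows "P \<alpha>"
  using assms(1)
proof (induction "sum_list \<alpha>" arbitrary: \<alpha> rule: less_induct)
  case less
  show ?case
  proof (cases "\<alpha> = []")
    case False
    then have "sum_list (remove_first_column \<alpha>) < sum_list \<alpha>"
      using sum_list_remove_first_column[OF less.prems] by simp
    then show ?thesis
      using less zero_notin_remove_first_column assms(3) False by blast
  qed (simp add: assms(2))
qed

definition second_column :: "nat list \<Rightarrow> nat set" where
  "second_column \<alpha> = {length (y # ys) | y ys. suffix (y # ys) \<alpha> \<and> 2 \<le> y}"

lemma second_column_Nil [simp]: "second_column [] = {}"
  by (simp add: second_column_def)

lemma second_column_Cons [simp]:
  "second_column (x # xs) = (if 2 \<le> x then {Suc (length xs)} else {}) \<union> second_column xs"
  by (auto simp: second_column_def suffix_Cons)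

lemma second_column_subset: "second_column \<alpha> \<subseteq> {1..length \<alpha>}"
  by (induction \<alpha>) auto

lemma Suc_length_notin_second_column [simp]: "Suc (length \<alpha>) \<notin> second_column \<alpha>"
  using second_column_subset by fastforce

lemma finite_second_column [simp]: "finite (second_column \<alpha>)"
  using second_column_subset finite_subset by blast

lemma card_second_column: "card (second_column \<alpha>) = length (remove_first_column \<alpha>)"
  by (induction \<alpha>) auto

lemma second_column_subset_sum_list:
  assumes "0 \<notin> set \<alpha>"
  shows "second_column \<alpha> \<subseteq> {1..<sum_list \<alpha>}"
proof (cases "second_column \<alpha> = {}")
  case False
  then have "0 < length (remove_first_column \<alpha>)"
    by (simp add: card_gt_0_iff flip: card_second_column)
  then have "length \<alpha> < sum_list \<alpha>"
    using sum_list_remove_first_column[OF assms]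
      length_le_sum_list[OF zero_notin_remove_first_column, of \<alpha>] by linarith
  then show ?thesis
    using second_column_subset[of \<alpha>] by auto
qed simp

section \<open>The recursion for \<open>\<Psi>\<close>\<close>

lemma mcols_conv_sum_list: "mcols \<alpha> t = sum_list (map (\<lambda>x. min x t) \<alpha>)"
  by (simp add: mcols_def sum_list_sum_nth atLeast0LessThan)

lemma mcols_0 [simp]: "mcols \<alpha> 0 = 0"
  by (simp add: mcols_def)

lemma mcols_Suc: "mcols \<alpha> (Suc t) = mcols \<alpha> t + length (filter (\<lambda>x. Suc t \<le> x) \<alpha>)"
  unfolding mcols_conv_sum_list by (induction \<alpha>) auto

lemma mcols_Suc_remove_first_column:
  "0 \<notin> set \<alpha> \<Longrightarrow> mcols \<alpha> (Suc t) = length \<alpha> + mcols (remove_first_column \<alpha>) t"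
  unfolding mcols_conv_sum_list by (induction \<alpha>) auto

lemma card_rows_above:
  assumes "i \<le> length \<alpha>"
  shows "card {j. j < i \<and> t \<le> \<alpha> ! j} = length (filter (\<lambda>x. t \<le> x) (take i \<alpha>))"
proof -
  have "{j. j < i \<and> t \<le> \<alpha> ! j} = {j. j < length (take i \<alpha>) \<and> t \<le> take i \<alpha> ! j}"
    using assms by auto
  then show ?thesis by (simp add: length_filter_conv_card)
qed

lemma label_conv_rows_below:
  assumes "i \<le> length \<alpha>"
  shows "mcols \<alpha> (Suc s) - card {j. j < i \<and> Suc s \<le> \<alpha> ! j}
           = mcols \<alpha> s + length (filter (\<lambda>x. Suc s \<le> x) (drop i \<alpha>))"
proof -
  have "length (filter (\<lambda>x. Suc s \<le> x) \<alpha>) = length (filter (\<lambda>x. Suc s \<le> x) (take i \<alpha>))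
          + length (filter (\<lambda>x. Suc s \<le> x) (drop i \<alpha>))"
    by (metis append_take_drop_id filter_append length_append)
  then show ?thesis
    using assms by (simp add: mcols_Suc card_rows_above)
qed

lemma Psi_conv_drop:
  "Psi \<alpha> = {mcols \<alpha> s + length (filter (\<lambda>x. Suc s \<le> x) (drop i \<alpha>)) | s i.
              i < length \<alpha> \<and> s + 2 \<le> \<alpha> ! i}"
  unfolding Psi_def
proof (intro set_eqI iffI; elim CollectE exE conjE)
  fix v t i
  assume "v = mcols \<alpha> t - card {j. j < i \<and> t \<le> \<alpha> ! j}" "1 \<le> t" "i < length \<alpha>" "t + 1 \<le> \<alpha> ! i"
  then show "v \<in> {mcols \<alpha> s + length (filter (\<lambda>x. Suc s \<le> x) (drop i \<alpha>)) | s i.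
                 i < length \<alpha> \<and> s + 2 \<le> \<alpha> ! i}"
    using label_conv_rows_below[of i \<alpha> "t - 1"]
    by (intro CollectI exI[of _ "t - 1"] exI[of _ i]) auto
next
  fix v s i
  assume "v = mcols \<alpha> s + length (filter (\<lambda>x. Suc s \<le> x) (drop i \<alpha>))" "i < length \<alpha>"
    "s + 2 \<le> \<alpha> ! i"
  then show "v \<in> {mcols \<alpha> t - card {j. j < i \<and> t \<le> \<alpha> ! j} | t i.
                 1 \<le> t \<and> i < length \<alpha> \<and> t + 1 \<le> \<alpha> ! i}"
    using label_conv_rows_below[of i \<alpha> s]
    by (intro CollectI exI[of _ "Suc s"] exI[of _ i]) auto
qed

text \<open>
  \<open>column_labels \<alpha> s\<close> is the set of numbers written in column \<open>s + 2\<close>, i.e. column \<open>t + 1\<close> of the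
  definition of \<open>\<Psi>\<close> with \<open>t = s + 1\<close>.  A row is represented by the suffix \<open>y # ys\<close> of \<open>\<alpha>\<close>
  starting with it, and its number \<open>m\<^sub>t - #(rows above with at least t cells)\<close> is rewritten
  as \<open>m\<^sub>t\<^sub>-\<^sub>1 + #(rows from it downwards with at least t cells)\<close>, which involves no subtraction.
\<close>
definition column_labels :: "nat list \<Rightarrow> nat \<Rightarrow> nat set" where
  "column_labels \<alpha> s = {mcols \<alpha> s + length (filter (\<lambda>x. Suc s \<le> x) (y # ys)) | y ys.
                          suffix (y # ys) \<alpha> \<and> s + 2 \<le> y}"

lemma Psi_conv_column_labels: "Psi \<alpha> = (\<Union>s. column_labels \<alpha> s)"
proof (intro set_eqI iffI)
  fix v
  assume "v \<in> Psi \<alpha>"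
  then obtain s i where "v = mcols \<alpha> s + length (filter (\<lambda>x. Suc s \<le> x) (drop i \<alpha>))"
    "i < length \<alpha>" "s + 2 \<le> \<alpha> ! i"
    unfolding Psi_conv_drop by blast
  then show "v \<in> (\<Union>s. column_labels \<alpha> s)"
    unfolding column_labels_def
    by (intro UN_I[where a = s] UNIV_I CollectI exI[of _ "\<alpha> ! i"] exI[of _ "drop (Suc i) \<alpha>"])
      (simp add: Cons_nth_drop_Suc suffix_drop)
next
  fix v
  assume "v \<in> (\<Union>s. column_labels \<alpha> s)"
  then obtain s y ys where v: "v = mcols \<alpha> s + length (filter (\<lambda>x. Suc s \<le> x) (y # ys))"
    and "suffix (y # ys) \<alpha>" "s + 2 \<le> y"
    unfolding column_labels_def by blast
  then obtain i where "i < length \<alpha>" "drop i \<alpha> = y # ys"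
    unfolding suffix_Cons_iff_drop by blast
  with v \<open>s + 2 \<le> y\<close> show "v \<in> Psi \<alpha>"
    unfolding Psi_conv_drop by (intro CollectI exI[of _ s] exI[of _ i]) (simp add: nth_via_drop)
qed

lemma column_labels_0:
  assumes "0 \<notin> set \<alpha>"
  shows "column_labels \<alpha> 0 = second_column \<alpha>"
proof -
  have "filter (\<lambda>x. Suc 0 \<le> x) ys = ys" if "suffix (y # ys) \<alpha>" for y ys
    using assms set_mono_suffix[OF that] by (intro filter_True) (auto intro: Suc_leI gr0I)
  then show ?thesis
    unfolding column_labels_def second_column_def
    by (intro Collect_cong ex_cong1) auto
qed

lemma column_labels_Suc:
  assumes "0 \<notin> set \<alpha>"
  shows "column_labels \<alpha> (Suc s) = (+) (length \<alpha>) ` column_labels (remove_first_column \<alpha>) s"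
proof -
  have label: "mcols \<alpha> (Suc s) + length (filter (\<lambda>x. Suc (Suc s) \<le> x) (y # ys))
          = length \<alpha> + (mcols (remove_first_column \<alpha>) s
              + length (filter (\<lambda>x. Suc s \<le> x) ((y - 1) # remove_first_column ys)))"
    if "2 \<le> y" for y ys
    using assms that by (auto simp: mcols_Suc_remove_first_column length_filter_remove_first_column)
  show ?thesis
  proof (intro set_eqI iffI)
    fix v
    assume "v \<in> column_labels \<alpha> (Suc s)"
    then obtain y ys where "suffix (y # ys) \<alpha>" "s + 3 \<le> y"
      and "v = mcols \<alpha> (Suc s) + length (filter (\<lambda>x. Suc (Suc s) \<le> x) (y # ys))"
      unfolding column_labels_def by auto
    then show "v \<in> (+) (length \<alpha>) ` column_labels (remove_first_column \<alpha>) s"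
      unfolding column_labels_def suffix_Cons_remove_first_column_iff using label[of y ys]
      by (intro image_eqI[where x = "v - length \<alpha>"] CollectI exI conjI) auto
  next
    fix v
    assume "v \<in> (+) (length \<alpha>) ` column_labels (remove_first_column \<alpha>) s"
    then obtain y ys where "suffix (y # ys) \<alpha>" "s + 3 \<le> y"
      and "v = length \<alpha> + (mcols (remove_first_column \<alpha>) s
                + length (filter (\<lambda>x. Suc s \<le> x) ((y - 1) # remove_first_column ys)))"
      unfolding column_labels_def suffix_Cons_remove_first_column_iff by auto
    with label[of y ys] show "v \<in> column_labels \<alpha> (Suc s)"
      unfolding column_labels_def by (intro CollectI exI conjI) auto
  qed
qed

theorem Psi_remove_first_column:
  assumes "0 \<notin> set \<alpha>"
  shows "Psi \<alpha> = second_column \<alpha> \<union> (+) (length \<alpha>) ` Psi (remove_first_column \<alpha>)"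
proof -
  have "Psi \<alpha> = column_labels \<alpha> 0 \<union> (\<Union>s. column_labels \<alpha> (Suc s))"
    unfolding Psi_conv_column_labels by (rule UN_nat_shift)
  also have "\<dots> = second_column \<alpha> \<union> (+) (length \<alpha>) ` Psi (remove_first_column \<alpha>)"
    using assms by (simp add: column_labels_0 column_labels_Suc Psi_conv_column_labels image_UN)
  finally show ?thesis .
qed

lemma Psi_Nil [simp]: "Psi [] = {}"
  by (simp add: Psi_def)

lemma Psi_subset: "0 \<notin> set \<alpha> \<Longrightarrow> Psi \<alpha> \<subseteq> {1..<sum_list \<alpha>}"
proof (induction \<alpha> rule: column_induct)
  case (step \<alpha>)
  have "(+) (length \<alpha>) ` Psi (remove_first_column \<alpha>) \<subseteq> {1..<sum_list \<alpha>}"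
    using step.IH sum_list_remove_first_column[OF step.hyps(2)] by auto
  then show ?case
    using Psi_remove_first_column[OF step.hyps(2)] second_column_subset_sum_list[OF step.hyps(2)]
    by blast
qed simp

lemma finite_Psi: "0 \<notin> set \<alpha> \<Longrightarrow> finite (Psi \<alpha>)"
  using Psi_subset finite_subset by blast

lemma second_column_eq_Psi_inter:
  "0 \<notin> set \<alpha> \<Longrightarrow> second_column \<alpha> = Psi \<alpha> \<inter> {..length \<alpha>}"
  using Psi_remove_first_column[of \<alpha>] Psi_subset[OF zero_notin_remove_first_column, of \<alpha>]
    second_column_subset[of \<alpha>] by auto

lemma shifted_Psi_remove_first_column_eq:
  "0 \<notin> set \<alpha> \<Longrightarrow> (+) (length \<alpha>) ` Psi (remove_first_column \<alpha>) = Psi \<alpha> \<inter> {length \<alpha><..}"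
  using Psi_remove_first_column[of \<alpha>] Psi_subset[OF zero_notin_remove_first_column, of \<alpha>]
    second_column_subset[of \<alpha>] by auto

lemma Psi_remove_first_column_disjoint:
  "0 \<notin> set \<alpha> \<Longrightarrow> second_column \<alpha> \<inter> (+) (length \<alpha>) ` Psi (remove_first_column \<alpha>) = {}"
  using second_column_subset[of \<alpha>] Psi_subset[OF zero_notin_remove_first_column, of \<alpha>]
  by fastforce

lemma card_Psi: "0 \<notin> set \<alpha> \<Longrightarrow> card (Psi \<alpha>) = sum_list \<alpha> - length \<alpha>"
proof (induction \<alpha> rule: column_induct)
  case (step \<alpha>)
  let ?\<beta> = "remove_first_column \<alpha>"
  have "card (Psi \<alpha>) = card (second_column \<alpha>) + card ((+) (length \<alpha>) ` Psi ?\<beta>)"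
    using Psi_remove_first_column[OF step.hyps(2)] Psi_remove_first_column_disjoint[OF step.hyps(2)]
      finite_Psi[OF zero_notin_remove_first_column]
    by (simp add: card_Un_disjoint)
  also have "\<dots> = length ?\<beta> + (sum_list ?\<beta> - length ?\<beta>)"
    using step.IH by (simp add: card_second_column card_image)
  also have "\<dots> = sum_list \<alpha> - length \<alpha>"
    using sum_list_remove_first_column[OF step.hyps(2)]
      length_le_sum_list[OF zero_notin_remove_first_column, of \<alpha>] by simp
  finally show ?case .
qed simp

lemma sum_Psi:
  assumes "0 \<notin> set \<alpha>"
  shows "\<Sum>(Psi \<alpha>) = \<Sum>(second_column \<alpha>) + length \<alpha> * card (Psi (remove_first_column \<alpha>))
                       + \<Sum>(Psi (remove_first_column \<alpha>))"
proof -
  let ?\<beta> = "remove_first_column \<alpha>"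
  have "\<Sum>(Psi \<alpha>) = \<Sum>(second_column \<alpha>) + \<Sum>((+) (length \<alpha>) ` Psi ?\<beta>)"
    using Psi_remove_first_column[OF assms] Psi_remove_first_column_disjoint[OF assms]
      finite_Psi[OF zero_notin_remove_first_column]
    by (simp add: sum.union_disjoint)
  also have "\<Sum>((+) (length \<alpha>) ` Psi ?\<beta>) = (\<Sum>v\<in>Psi ?\<beta>. length \<alpha> + v)"
    by (simp add: sum.reindex)
  finally show ?thesis
    by (simp add: sum.distrib)
qed

section \<open>Bijectivity\<close>

lemma list_eq_by_columns:
  "length \<alpha> = length \<beta> \<Longrightarrow> 0 \<notin> set \<alpha> \<Longrightarrow> 0 \<notin> set \<beta> \<Longrightarrow>
   second_column \<alpha> = second_column \<beta> \<Longrightarrow> remove_first_column \<alpha> = remove_first_column \<beta> \<Longrightarrow>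
   \<alpha> = \<beta>"
proof (induction \<alpha> \<beta> rule: list_induct2)
  case (Cons x xs y ys)
  have "Suc (length zs) \<in> second_column (z # zs) \<longleftrightarrow> 2 \<le> z" for z and zs :: "nat list"
    by simp
  then have long_iff: "2 \<le> x \<longleftrightarrow> 2 \<le> y"
    using Cons.prems(3) Cons.hyps by metis
  have "second_column xs = second_column (x # xs) - {Suc (length xs)}"
    "second_column ys = second_column (y # ys) - {Suc (length ys)}"
    by auto
  then have "second_column xs = second_column ys"
    using Cons.prems(3) Cons.hyps by simp
  moreover have "x = y" "remove_first_column xs = remove_first_column ys"
    using Cons.prems long_iff by (auto split: if_splits)
  ultimately show ?case
    using Cons by auto
qed simp

lemma Psi_inj:
  "0 \<notin> set \<alpha> \<Longrightarrow> 0 \<notin> set \<beta> \<Longrightarrow> sum_list \<alpha> = sum_list \<beta> \<Longrightarrow> Psi \<alpha> = Psi \<beta> \<Longrightarrow> \<alpha> = \<beta>"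
proof (induction \<alpha> arbitrary: \<beta> rule: column_induct)
  case Nil
  then show ?case by (cases \<beta>) auto
next
  case (step \<alpha>)
  have same_length: "length \<alpha> = length \<beta>"
    using card_Psi[OF step.hyps(2)] card_Psi[OF step.prems(1)] step.prems
      length_le_sum_list[OF step.hyps(2)] length_le_sum_list[OF step.prems(1)] by simp
  have "second_column \<alpha> = second_column \<beta>"
    using second_column_eq_Psi_inter[OF step.hyps(2)] second_column_eq_Psi_inter[OF step.prems(1)]
      step.prems(3) same_length by simp
  moreover have "(+) (length \<alpha>) ` Psi (remove_first_column \<alpha>)
                   = (+) (length \<alpha>) ` Psi (remove_first_column \<beta>)"
    using shifted_Psi_remove_first_column_eq[OF step.hyps(2)]
      shifted_Psi_remove_first_column_eq[OF step.prems(1)] step.prems(3) same_length by simp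
  then have "remove_first_column \<alpha> = remove_first_column \<beta>"
    using step.IH zero_notin_remove_first_column step.prems same_length
      sum_list_remove_first_column[OF step.hyps(2)] sum_list_remove_first_column[OF step.prems(1)]
    by (simp add: inj_image_eq_iff)
  ultimately show ?case
    using list_eq_by_columns same_length step.hyps(2) step.prems(1) by blast
qed

lemma exists_list_with_columns:
  "A \<subseteq> {1..k} \<Longrightarrow> card A = length \<beta> \<Longrightarrow> 0 \<notin> set \<beta> \<Longrightarrow>
   \<exists>\<alpha>. length \<alpha> = k \<and> 0 \<notin> set \<alpha> \<and> second_column \<alpha> = A \<and> remove_first_column \<alpha> = \<beta>"
proof (induction k arbitrary: A \<beta>)
  case 0
  then show ?case by (intro exI[of _ "[]"]) auto
next
  case (Suc k)
  show ?case
  proof (cases "Suc k \<in> A")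
    case True
    then obtain y \<beta>' where \<beta>: "\<beta> = y # \<beta>'"
      using Suc.prems(1,2) by (cases \<beta>) (auto simp: finite_subset)
    have "A - {Suc k} \<subseteq> {1..k}" "card (A - {Suc k}) = length \<beta>'" "0 \<notin> set \<beta>'"
      using Suc.prems True \<beta> by (auto simp: finite_subset)
    then obtain \<alpha> where "length \<alpha> = k" "0 \<notin> set \<alpha>" "second_column \<alpha> = A - {Suc k}"
      "remove_first_column \<alpha> = \<beta>'"
      using Suc.IH by blast
    then show ?thesis
      using True \<beta> Suc.prems(3) by (intro exI[of _ "Suc y # \<alpha>"]) auto
  next
    case False
    then have "A \<subseteq> {1..k}"
      using Suc.prems(1) by (auto simp: le_Suc_eq)
    then obtain \<alpha> where "length \<alpha> = k" "0 \<notin> set \<alpha>" "second_column \<alpha> = A"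
      "remove_first_column \<alpha> = \<beta>"
      using Suc.IH Suc.prems by blast
    then show ?thesis
      by (intro exI[of _ "1 # \<alpha>"]) auto
  qed
qed

lemma card_Int_atMost_greaterThan:
  fixes I :: "'a :: linorder set"
  assumes "finite I"
  shows "card I = card (I \<inter> {..k}) + card (I \<inter> {k<..})"
proof -
  have "card I = card (I \<inter> {..k} \<union> I \<inter> {k<..})"
    by (rule arg_cong[where f = card]) (auto simp: not_less)
  also have "\<dots> = card (I \<inter> {..k}) + card (I \<inter> {k<..})"
    using assms by (intro card_Un_disjoint) auto
  finally show ?thesis .
qed

lemma Psi_surj: "I \<subseteq> {1..<n} \<Longrightarrow> \<exists>\<alpha>. 0 \<notin> set \<alpha> \<and> sum_list \<alpha> = n \<and> Psi \<alpha> = I"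
proof (induction n arbitrary: I rule: less_induct)
  case (less n)
  show ?case
  proof (cases "n = 0")
    case True
    then show ?thesis
      using less.prems by (intro exI[of _ "[]"]) auto
  next
    case False
    define k where "k = n - card I"
    define J where "J = (\<lambda>v. v - k) ` (I \<inter> {k<..})"
    have "card I < n"
      using card_mono[OF _ less.prems] False by simp
    then have n: "n = k + card I"
      unfolding k_def by auto
    have shift_J: "(+) k ` J = I \<inter> {k<..}"
      unfolding J_def image_image by (auto intro!: image_eqI)
    have "J \<subseteq> {1..<card I}"
      using n unfolding J_def by (auto dest!: subsetD[OF less.prems])
    then obtain \<beta> where \<beta>: "0 \<notin> set \<beta>" "sum_list \<beta> = card I" "Psi \<beta> = J"
      using less.IH \<open>card I < n\<close> by blast
    have "card J = card (I \<inter> {k<..})"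
      unfolding J_def by (rule card_image) (auto simp: inj_on_def)
    then have "card (I \<inter> {..k}) = length \<beta>"
      using card_Int_atMost_greaterThan[of I k] finite_subset[OF less.prems] card_Psi[OF \<beta>(1)] \<beta>
        length_le_sum_list[OF \<beta>(1)] by simp
    moreover have "I \<inter> {..k} \<subseteq> {1..k}"
      using less.prems by auto
    ultimately obtain \<alpha> where \<alpha>: "length \<alpha> = k" "0 \<notin> set \<alpha>" "second_column \<alpha> = I \<inter> {..k}"
      "remove_first_column \<alpha> = \<beta>"
      using exists_list_with_columns \<beta>(1) by blast
    have "Psi \<alpha> = I"
      using Psi_remove_first_column[OF \<alpha>(2)] \<alpha> \<beta>(3) shift_J by auto
    moreover have "sum_list \<alpha> = n"
      using sum_list_remove_first_column[OF \<alpha>(2)] \<alpha> \<beta>(2) n by simp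
    ultimately show ?thesis
      using \<alpha>(2) by blast
  qed
qed

section \<open>The statistic\<close>

text \<open>\<open>b(\<alpha>) = \<Sum>\<^sub>i\<^sub><\<^sub>j min \<alpha>\<^sub>i \<alpha>\<^sub>j\<close>: in the decreasing rearrangement the part with index \<open>i\<close>
  is the smaller one in exactly \<open>i\<close> pairs, and the pair sum does not depend on the order.\<close>
primrec pair_min_sum :: "nat list \<Rightarrow> nat" where
  "pair_min_sum [] = 0"
| "pair_min_sum (x # xs) = sum_list (map (min x) xs) + pair_min_sum xs"

lemma pair_min_sum_sorted:
  "sorted_wrt (\<ge>) xs \<Longrightarrow> pair_min_sum xs = (\<Sum>i<length xs. i * xs ! i)"
proof (induction xs)
  case (Cons x xs)
  have "map (min x) xs = xs"
    using Cons.prems by (induction xs) (auto simp: min_def)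
  then show ?case
    using Cons by (simp add: sum.lessThan_Suc_shift sum_list_sum_nth atLeast0LessThan sum.distrib
        del: sum.lessThan_Suc)
qed simp

lemma pair_min_sum_double: "2 * pair_min_sum xs + sum_list xs = (\<Sum>x\<leftarrow>xs. \<Sum>y\<leftarrow>xs. min x y)"
proof (induction xs)
  case (Cons x xs)
  have "(\<Sum>y\<leftarrow>xs. min y x) = (\<Sum>y\<leftarrow>xs. min x y)"
    by (simp add: min.commute)
  with Cons show ?case
    by (simp add: sum_list_addf)
qed simp

lemma pair_min_sum_mset_eq: "mset xs = mset ys \<Longrightarrow> pair_min_sum xs = pair_min_sum ys"
proof -
  assume mset: "mset xs = mset ys"
  have sum_list_map: "sum_list (map f zs) = sum_mset (image_mset f (mset zs))"
    for f and zs :: "nat list"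
    by (metis mset_map sum_mset_sum_list)
  have "(\<Sum>x\<leftarrow>xs. \<Sum>y\<leftarrow>xs. min x y) = (\<Sum>x\<leftarrow>ys. \<Sum>y\<leftarrow>ys. min x y)"
    unfolding sum_list_map mset ..
  moreover have "sum_list xs = sum_list ys"
    using mset by (metis sum_mset_sum_list)
  ultimately show ?thesis
    using pair_min_sum_double[of xs] pair_min_sum_double[of ys] by simp
qed

lemma bstat_eq_pair_min_sum: "bstat \<alpha> = pair_min_sum \<alpha>"
proof -
  have "bstat \<alpha> = pair_min_sum (rev (sort \<alpha>))"
    by (simp add: bstat_def pair_min_sum_sorted sorted_wrt_rev)
  also have "\<dots> = pair_min_sum \<alpha>"
    by (rule pair_min_sum_mset_eq) simp
  finally show ?thesis .
qed

lemma Suc_choose_two: "Suc k choose 2 = k + (k choose 2)"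
  by (simp add: numeral_2_eq_2)

lemma add_choose_two: "(a + b) choose 2 = (a choose 2) + a * b + (b choose 2)"
  by (induction b) (simp_all add: Suc_choose_two)

lemma bstat_remove_first_column:
  "0 \<notin> set \<alpha> \<Longrightarrow> bstat \<alpha> = (length \<alpha> choose 2) + bstat (remove_first_column \<alpha>)"
  unfolding bstat_eq_pair_min_sum
proof (induction \<alpha>)
  case (Cons x xs)
  have "sum_list (map (min x) xs)
          = length xs + sum_list (map (min (x - 1)) (remove_first_column xs))"
    using Cons.prems by (induction xs) (auto simp: min_def)
  with Cons show ?case
    by (simp add: Suc_choose_two)
qed simp

lemma coinv_Nil [simp]: "coinv [] = 0"
  by (simp add: coinv_def)

lemma coinv_Cons [simp]: "coinv (x # xs) = length (filter (\<lambda>y. x < y) xs) + coinv xs"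
proof -
  let ?pairs = "\<lambda>\<alpha>. {(i, j). i < j \<and> j < length \<alpha> \<and> \<alpha> ! i < \<alpha> ! j}"
  let ?first = "{j. j < length xs \<and> x < xs ! j}"
  have "?pairs (x # xs) = Pair (0::nat) ` Suc ` ?first \<union> map_prod Suc Suc ` ?pairs xs"
  proof (intro equalityI subsetI)
    fix p assume "p \<in> ?pairs (x # xs)"
    then obtain i j where p: "p = (i, j)" "i < j" "j < Suc (length xs)"
      "(x # xs) ! i < (x # xs) ! j"
      by auto
    then obtain j' where "j = Suc j'"
      by (cases j) auto
    with p show "p \<in> Pair (0::nat) ` Suc ` ?first \<union> map_prod Suc Suc ` ?pairs xs"
      by (cases i) (auto intro: image_eqI[where x = "(i - 1, j)"])
  qed auto
  then have "coinv (x # xs) = card (Pair (0::nat) ` Suc ` ?first \<union> map_prod Suc Suc ` ?pairs xs)"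
    unfolding coinv_def by simp
  also have "\<dots> = card (Pair (0::nat) ` Suc ` ?first) + card (map_prod Suc Suc ` ?pairs xs)"
  proof (rule card_Un_disjoint)
    show "finite (map_prod Suc Suc ` ?pairs xs)"
      by (rule finite_imageI, rule finite_subset[of _ "{..<length xs} \<times> {..<length xs}"]) auto
  qed auto
  also have "\<dots> = card ?first + coinv xs"
    unfolding coinv_def by (simp add: card_image inj_on_def)
  finally show ?thesis
    by (simp add: length_filter_conv_card)
qed

text \<open>The coinversions lost by removing the first column are the pairs \<open>i < j\<close> with
  \<open>\<alpha>\<^sub>i = 1 < \<alpha>\<^sub>j\<close>.\<close>
lemma coinv_remove_first_column:
  "0 \<notin> set \<alpha> \<Longrightarrow> \<Sum>(second_column \<alpha>) + coinv \<alpha> + (length (remove_first_column \<alpha>) choose 2)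
     = coinv (remove_first_column \<alpha>) + length \<alpha> * length (remove_first_column \<alpha>)"
proof (induction \<alpha>)
  case (Cons x xs)
  show ?case
  proof (cases "2 \<le> x")
    case True
    then have "length (filter (\<lambda>y. x < y) xs)
                 = length (filter (\<lambda>y. x - 1 < y) (remove_first_column xs))"
      by (simp add: length_filter_less_remove_first_column)
    with Cons True show ?thesis
      by (auto simp: Suc_choose_two algebra_simps)
  next
    case False
    then have "x = 1"
      using Cons.prems by auto
    moreover have "length (filter (\<lambda>y. 1 < y) xs) = length (remove_first_column xs)"
      by (induction xs) auto
    ultimately show ?thesis
      using Cons by (simp add: algebra_simps)
  qed
qed simp

lemma Psi_statistic:
  "0 \<notin> set \<alpha> \<Longrightarrow>
   \<Sum>(Psi \<alpha>) + 2 * bstat \<alpha> + coinv \<alpha> = (sum_list \<alpha> choose 2) + (length \<alpha> choose 2)"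
proof (induction \<alpha> rule: column_induct)
  case (step \<alpha>)
  let ?\<beta> = "remove_first_column \<alpha>"
  let ?l = "length \<alpha>" and ?l' = "length ?\<beta>" and ?m = "sum_list ?\<beta>"
  have "?l' \<le> ?m"
    by (rule length_le_sum_list[OF zero_notin_remove_first_column])
  then have "?l * (?m - ?l') + ?l * ?l' = ?l * ?m"
    by (simp add: diff_mult_distrib2)
  moreover have "\<Sum>(Psi \<alpha>) = \<Sum>(second_column \<alpha>) + ?l * (?m - ?l') + \<Sum>(Psi ?\<beta>)"
    using sum_Psi[OF step.hyps(2)] card_Psi[OF zero_notin_remove_first_column] by simp
  moreover have "sum_list \<alpha> choose 2 = (?l choose 2) + ?l * ?m + (?m choose 2)"
    using sum_list_remove_first_column[OF step.hyps(2)] add_choose_two by simp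
  ultimately show ?case
    using step.IH coinv_remove_first_column[OF step.hyps(2)]
      bstat_remove_first_column[OF step.hyps(2)] by linarith
qed (simp add: bstat_eq_pair_min_sum)

lemma compositions_iff: "\<alpha> \<in> compositions n \<longleftrightarrow> 0 \<notin> set \<alpha> \<and> sum_list \<alpha> = n"
  unfolding compositions_def by (auto intro: gr0I)

lemma bij_betw_Psi: "bij_betw Psi (compositions n) (Pow {1..<n})"
  unfolding bij_betw_def
proof (intro conjI equalityI subsetI inj_onI)
  fix \<alpha> \<beta>
  assume "\<alpha> \<in> compositions n" "\<beta> \<in> compositions n" "Psi \<alpha> = Psi \<beta>"
  then show "\<alpha> = \<beta>"
    using Psi_inj[of \<alpha> \<beta>] by (simp add: compositions_iff)
next
  fix I
  assume "I \<in> Psi ` compositions n"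
  then obtain \<alpha> where "0 \<notin> set \<alpha>" "sum_list \<alpha> = n" "I = Psi \<alpha>"
    by (auto simp: compositions_iff)
  then show "I \<in> Pow {1..<n}"
    using Psi_subset by auto
next
  fix I
  assume "I \<in> Pow {1..<n}"
  then obtain \<alpha> where "0 \<notin> set \<alpha>" "sum_list \<alpha> = n" "Psi \<alpha> = I"
    using Psi_surj by blast
  then show "I \<in> Psi ` compositions n"
    by (intro image_eqI[of _ _ \<alpha>]) (simp_all add: compositions_iff)
qed

lemma card_Psi_composition: "\<alpha> \<in> compositions n \<Longrightarrow> card (Psi \<alpha>) = n - length \<alpha>"
  by (simp add: compositions_iff card_Psi)

lemma Psi_statistic_composition:
  assumes "\<alpha> \<in> compositions n"
  shows "2 * int (bstat \<alpha>) - int (length \<alpha> choose 2) + int (coinv \<alpha>)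
           = int (n choose 2) - int (\<Sum>(Psi \<alpha>))"
proof -
  from assms have \<alpha>: "0 \<notin> set \<alpha>" "sum_list \<alpha> = n"
    by (simp_all add: compositions_iff)
  have "int (\<Sum>(Psi \<alpha>) + 2 * bstat \<alpha> + coinv \<alpha>) = int ((n choose 2) + (length \<alpha> choose 2))"
    using Psi_statistic[OF \<alpha>(1)] \<alpha>(2) by (simp only:)
  then show ?thesis
    unfolding of_nat_add of_nat_mult by simp
qed

lemma sum_compositions_eq_sum_subsets:
  fixes z q :: "'a :: field"
  shows "(\<Sum>\<alpha>\<in>compositions n. z ^ (n - length \<alpha>) *
            q powi (2 * int (bstat \<alpha>) - int (length \<alpha> choose 2) + int (coinv \<alpha>)))
         = (\<Sum>I\<in>Pow {1..<n}. z ^ card I * q powi (int (n choose 2) - int (\<Sum>I)))"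
    (is "_ = (\<Sum>I\<in>_. ?weight I)")
proof -
  have "?weight (Psi \<alpha>) = z ^ (n - length \<alpha>) *
          q powi (2 * int (bstat \<alpha>) - int (length \<alpha> choose 2) + int (coinv \<alpha>))"
    if "\<alpha> \<in> compositions n" for \<alpha>
    using card_Psi_composition[OF that] Psi_statistic_composition[OF that] by (simp only:)
  then have "(\<Sum>\<alpha>\<in>compositions n. z ^ (n - length \<alpha>) *
               q powi (2 * int (bstat \<alpha>) - int (length \<alpha> choose 2) + int (coinv \<alpha>)))
             = (\<Sum>\<alpha>\<in>compositions n. ?weight (Psi \<alpha>))"
    by (simp cong: sum.cong)
  also have "\<dots> = (\<Sum>I\<in>Pow {1..<n}. ?weight I)"
    by (rule sum.reindex_bij_betw[OF bij_betw_Psi])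
  finally show ?thesis .
qed

theorem theorem1p5:
  fixes n :: nat
  assumes "1 \<le> n"
  shows "bij_betw Psi (compositions n) (Pow {1..<n})
    \<and> (\<forall>\<alpha>\<in>compositions n.
          n - length \<alpha> = card (Psi \<alpha>)
        \<and> 2 * int (bstat \<alpha>) - int (length \<alpha> choose 2) + int (coinv \<alpha>)
            = int (n choose 2) - int (\<Sum>(Psi \<alpha>)))
    \<and> (\<forall>(z::'a::field) (q::'a). q \<noteq> 0 \<longrightarrow>
          (\<Sum>\<alpha>\<in>compositions n. z ^ (n - length \<alpha>) *
              q powi (2 * int (bstat \<alpha>) - int (length \<alpha> choose 2) + int (coinv \<alpha>)))
          = (\<Sum>I\<in>Pow {1..<n}. z ^ card I * q powi (int (n choose 2) - int (\<Sum>I))))"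
proof -
  show ?thesis
    using bij_betw_Psi card_Psi_composition Psi_statistic_composition
      sum_compositions_eq_sum_subsets
    by (intro conjI ballI allI impI) simp_all
qed

end
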